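(* Let $n,k$ be positive integers with $n \geq 3(n-k)$ and $n\geq k$, and let $C\in\mathcal{K}_{k+1}(n+1)$. Let $M=\{k+2,k+3,\dots,2n-k+1\}$, and let $S_C$ be the set of chords of $C$ having neither their start point nor their end point in $M$. Let $a$ be the chord of $C$ whose end point is $2n-k+2$. Let $m$ be the number of chords $b\in S_C$ with $s_b<s_a$. Then $m<n-k+1$.
   Context: A linear chord diagram of size $n$ is a partition of $\{1,2,\dots,2n\}$ into blocks of size two, called chords. For a chord $c=\{s_c,e_c\}$ with $s_c<e_c$, $s_c$ is its start point, $e_c$ its end point, and its length is $e_c-s_c$. $\mathcal{K}_k(n)$ is the set of all linear chord diagrams of size $n$ in which every chord has length at least $k$. (Under the hypotheses, $2n-k+2$ is an end point of some chord of $C$.) *)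

theory Defs
  imports "HOL-Library.Disjoint_Sets"
begin

definition chord_diagram :: "nat \<Rightarrow> nat set set \<Rightarrow> bool" where
  "chord_diagram n C \<longleftrightarrow> partition_on {1..2*n} C \<and> (\<forall>c\<in>C. card c = 2)"

definition start_pt :: "nat set \<Rightarrow> nat" where "start_pt c = Min c"
definition end_pt :: "nat set \<Rightarrow> nat" where "end_pt c = Max c"
definition chord_length :: "nat set \<Rightarrow> nat" where "chord_length c = end_pt c - start_pt c"

definition K :: "nat \<Rightarrow> nat \<Rightarrow> nat set set set" where
  "K k n = {C. chord_diagram n C \<and> (\<forall>c\<in>C. chord_length c \<ge> k)}"

end

theory Submission
  imports Defs
begin

text \<open>Let \<open>a\<close> span \<open>[s, e]\<close> and let \<open>Y\<close> and \<open>W\<close> be the points outside and strictly inside \<open>a\<close>.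
  Every other chord meets \<open>Y \<union> W\<close> in two points, so counting points chord by chord gives
  \<open>|Y| + 2 #(chords inside W) = |W| + 2 #(chords inside Y)\<close>. A chord inside \<open>W\<close> has length at
  least \<open>k + 1\<close>, so its start lies in \<open>(s, 2(n - k)]\<close>; this bounds the chords inside \<open>W\<close> and
  hence those inside \<open>Y\<close>. Every chord of \<open>S\<^sub>C\<close> starting before \<open>s\<close> must end after \<open>e\<close>,
  so it lies inside \<open>Y\<close>. The count yields even \<open>m \<le> n - k - 1\<close>.\<close>

lemma partition_on_block_unique:
  assumes "partition_on A P" "p \<in> P" "q \<in> P" "x \<in> p" "x \<in> q"
  shows "p = q"
  using assms by (auto simp: partition_on_def disjoint_def)

lemma sum_card_Int_partition:
  assumes "partition_on A P" "finite A" "X \<subseteq> A"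
  shows "(\<Sum>p\<in>P. card (p \<inter> X)) = card X"
proof -
  have "X = (\<Union>p\<in>P. p \<inter> X)"
    using assms(3) partition_onD1[OF assms(1)] by blast
  moreover have "card (\<Union>p\<in>P. p \<inter> X) = (\<Sum>p\<in>P. card (p \<inter> X))"
  proof (rule card_UN_disjoint)
    show "finite P"
      using finite_elements[OF assms(2,1)] .
    show "\<forall>p\<in>P. finite (p \<inter> X)"
      using assms(2,3) finite_subset by blast
    show "\<forall>p\<in>P. \<forall>q\<in>P. p \<noteq> q \<longrightarrow> p \<inter> X \<inter> (q \<inter> X) = {}"
      using partition_on_block_unique[OF assms(1)] by blast
  qed
  ultimately show ?thesis
    by simp
qed

text \<open>A pair block with one point in \<open>Y\<close> and one in \<open>W\<close> contributes equally to both sides.\<close>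

lemma pair_partition_balance:
  assumes part: "partition_on A P" and "finite A" and pairs: "\<And>p. p \<in> P \<Longrightarrow> card p = 2"
    and "a \<in> P" "Y \<inter> W = {}" "Y \<union> W = A - a"
  shows "card Y + 2 * card {p \<in> P. p \<subseteq> W} = card W + 2 * card {p \<in> P. p \<subseteq> Y}"
proof -
  have finP: "finite P"
    using finite_elements[OF \<open>finite A\<close> part] .
  have block: "card (p \<inter> Y) + (if p \<subseteq> W then 2 else 0) = card (p \<inter> W) + (if p \<subseteq> Y then 2 else 0)"
    if "p \<in> P" for p
  proof (cases "p = a")
    case True
    then have "p \<inter> Y = {}" "p \<inter> W = {}"
      using \<open>Y \<union> W = A - a\<close> by blast+
    moreover have "p \<noteq> {}"
      using pairs[OF \<open>p \<in> P\<close>] by auto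
    ultimately have "\<not> p \<subseteq> Y" "\<not> p \<subseteq> W"
      by blast+
    with \<open>p \<inter> Y = {}\<close> \<open>p \<inter> W = {}\<close> show ?thesis
      by simp
  next
    case False
    then have "p \<inter> a = {}"
      using partition_on_block_unique[OF part \<open>p \<in> P\<close> \<open>a \<in> P\<close>] by blast
    moreover have "p \<subseteq> A"
      using partition_onD1[OF part] \<open>p \<in> P\<close> by blast
    ultimately have p_split: "p = (p \<inter> Y) \<union> (p \<inter> W)"
      using \<open>Y \<union> W = A - a\<close> by blast
    have "finite p"
      using pairs[OF \<open>p \<in> P\<close>] card.infinite by fastforce
    have "2 = card ((p \<inter> Y) \<union> (p \<inter> W))"
      using pairs[OF \<open>p \<in> P\<close>] p_split by simp
    also have "\<dots> = card (p \<inter> Y) + card (p \<inter> W)"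
      by (rule card_Un_disjoint) (use \<open>finite p\<close> \<open>Y \<inter> W = {}\<close> in auto)
    finally have "card (p \<inter> Y) + card (p \<inter> W) = 2" ..
    moreover have "p \<subseteq> Y \<longleftrightarrow> card (p \<inter> Y) = 2" "p \<subseteq> W \<longleftrightarrow> card (p \<inter> W) = 2"
      using card_subset_eq[of p "p \<inter> Y"] card_subset_eq[of p "p \<inter> W"] \<open>finite p\<close> pairs[OF \<open>p \<in> P\<close>]
      by (auto simp: Int_absorb2)
    ultimately show ?thesis
      by auto
  qed
  have "(\<Sum>p\<in>P. card (p \<inter> Y) + (if p \<subseteq> W then 2 else 0))
      = (\<Sum>p\<in>P. card (p \<inter> W) + (if p \<subseteq> Y then 2 else 0))"
    using block by (rule sum.cong[OF refl])
  moreover have "Y \<subseteq> A" "W \<subseteq> A"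
    using \<open>Y \<union> W = A - a\<close> by blast+
  ultimately show ?thesis
    using sum_card_Int_partition[OF part \<open>finite A\<close>] finP
    by (simp add: sum.distrib sum.If_cases Int_def)
qed

lemma chord_diagram_finite:
  "chord_diagram N C \<Longrightarrow> finite C"
  unfolding chord_diagram_def using finite_elements by blast

lemma chord_diagram_chord:
  assumes "chord_diagram N C" "c \<in> C"
  shows "c = {start_pt c, end_pt c}" "start_pt c < end_pt c" "1 \<le> start_pt c" "end_pt c \<le> 2 * N"
proof -
  obtain x y where "c = {x, y}" "x \<noteq> y"
    using assms by (auto simp: chord_diagram_def card_2_iff)
  then have "c = {start_pt c, end_pt c} \<and> start_pt c < end_pt c"
    unfolding start_pt_def end_pt_def by (cases "x < y") (auto simp: insert_commute)
  moreover have "c \<subseteq> {1..2 * N}"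
    using assms partition_onD1 unfolding chord_diagram_def by blast
  ultimately show "c = {start_pt c, end_pt c}" "start_pt c < end_pt c" "1 \<le> start_pt c" "end_pt c \<le> 2 * N"
    by auto
qed

lemma chord_diagram_chord_eqI:
  assumes "chord_diagram N C" "b \<in> C" "c \<in> C" "x \<in> b" "x \<in> c"
  shows "b = c"
  using assms(1) partition_on_block_unique[OF _ assms(2-5)] unfolding chord_diagram_def by blast

lemma K_chord_diagram: "C \<in> K L N \<Longrightarrow> chord_diagram N C"
  by (simp add: K_def)

lemma K_start_add_le_end:
  assumes "C \<in> K L N" "c \<in> C"
  shows "start_pt c + L \<le> end_pt c"
  using assms chord_diagram_chord(2)[OF K_chord_diagram[OF assms(1)] assms(2)]
  unfolding K_def chord_length_def by fastforce

lemma card_chords_within_le: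
  assumes "C \<in> K L N"
  shows "card {c \<in> C. c \<subseteq> {s<..<e}} \<le> e - L - s - 1"
proof -
  note diagram = K_chord_diagram[OF assms]
  have "start_pt ` {c \<in> C. c \<subseteq> {s<..<e}} \<subseteq> {s<..<e - L}"
  proof
    fix x assume "x \<in> start_pt ` {c \<in> C. c \<subseteq> {s<..<e}}"
    then obtain c where c: "c \<in> C" "c \<subseteq> {s<..<e}" "x = start_pt c"
      by blast
    have "start_pt c \<in> c" "end_pt c \<in> c"
      using chord_diagram_chord(1)[OF diagram \<open>c \<in> C\<close>] by blast+
    then have "s < start_pt c" "end_pt c < e"
      using \<open>c \<subseteq> {s<..<e}\<close> by auto
    then show "x \<in> {s<..<e - L}"
      using c K_start_add_le_end[OF assms \<open>c \<in> C\<close>] by auto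
  qed
  moreover have "inj_on start_pt C"
    by (rule inj_onI, rule chord_diagram_chord_eqI[OF diagram])
       (use chord_diagram_chord(1)[OF diagram] in \<open>blast+\<close>)
  ultimately have "card {c \<in> C. c \<subseteq> {s<..<e}} \<le> card {s<..<e - L}"
    by (intro card_inj_on_le[where f = start_pt]) (auto intro: inj_on_subset)
  then show ?thesis
    by simp
qed

theorem lemma3:
  fixes n k :: nat and C :: "nat set set" and a :: "nat set"
  assumes "0 < n" "0 < k" "n \<ge> 3 * (n - k)" "n \<ge> k"
    and "C \<in> K (k + 1) (n + 1)"
    and "a \<in> C" "end_pt a = 2 * n - k + 2"
  shows "card {b \<in> {c \<in> C. start_pt c \<notin> {k + 2 .. 2 * n - k + 1} \<and> end_pt c \<notin> {k + 2 .. 2 * n - k + 1}}.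
                 start_pt b < start_pt a} < n - k + 1"
proof -
  let ?S = "{b \<in> {c \<in> C. start_pt c \<notin> {k + 2 .. 2 * n - k + 1} \<and> end_pt c \<notin> {k + 2 .. 2 * n - k + 1}}.
    start_pt b < start_pt a}"
  note diagram = K_chord_diagram[OF assms(5)]
  define s e where "s = start_pt a" and "e = end_pt a"
  have a_eq: "a = {s, e}" and "1 \<le> s" and "e \<le> 2 * (n + 1)"
    using chord_diagram_chord[OF diagram assms(6)] by (simp_all add: s_def e_def)
  have "s + (k + 1) \<le> e"
    using K_start_add_le_end[OF assms(5,6)] by (simp add: s_def e_def)
  define Y where "Y = {1..<s} \<union> {e<..2 * (n + 1)}"
  have "Y \<inter> {s<..<e} = {}" "Y \<union> {s<..<e} = {1..2 * (n + 1)} - a"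
    using \<open>1 \<le> s\<close> \<open>s + (k + 1) \<le> e\<close> \<open>e \<le> 2 * (n + 1)\<close> by (auto simp: Y_def a_eq)
  then have balance: "card Y + 2 * card {c \<in> C. c \<subseteq> {s<..<e}} = card {s<..<e} + 2 * card {c \<in> C. c \<subseteq> Y}"
    using diagram assms(6) unfolding chord_diagram_def by (intro pair_partition_balance) auto
  have card_Y: "card Y = (s - 1) + (2 * (n + 1) - e)"
    unfolding Y_def using \<open>s + (k + 1) \<le> e\<close> by (subst card_Un_disjoint) auto
  have inner: "card {c \<in> C. c \<subseteq> {s<..<e}} \<le> e - (k + 1) - s - 1"
    using card_chords_within_le[OF assms(5)] .
  have "?S \<subseteq> {c \<in> C. c \<subseteq> Y}"
  proof
    fix b assume "b \<in> ?S"
    then have b: "b \<in> C" "start_pt b < start_pt a" "end_pt b \<notin> {k + 2 .. 2 * n - k + 1}"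
      by simp_all
    note b_chord = chord_diagram_chord[OF diagram b(1)]
    have "end_pt b \<noteq> e"
      using chord_diagram_chord_eqI[OF diagram b(1) assms(6), of e] b(2) b_chord(1) a_eq by blast
    moreover have "k + 2 \<le> end_pt b"
      using K_start_add_le_end[OF assms(5) b(1)] b_chord(3) by simp
    ultimately have "end_pt b \<in> {e<..2 * (n + 1)}"
      using b(3) b_chord(4) assms(4,7) unfolding e_def by auto
    moreover have "start_pt b \<in> {1..<s}"
      using b(2) b_chord(3) unfolding s_def by simp
    ultimately have "b \<subseteq> Y"
      unfolding Y_def by (subst b_chord(1)) blast
    with b(1) show "b \<in> {c \<in> C. c \<subseteq> Y}"
      by simp
  qed
  then have "card ?S \<le> card {c \<in> C. c \<subseteq> Y}"
    by (rule card_mono[rotated]) (simp add: chord_diagram_finite[OF diagram])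
  moreover have "card {c \<in> C. c \<subseteq> Y} < n - k + 1"
    using balance card_Y inner \<open>1 \<le> s\<close> \<open>s + (k + 1) \<le> e\<close> assms(4,7) unfolding e_def by simp
  ultimately show ?thesis
    by linarith
qed

end
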